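(* Let $q$ be a query program, $P$ a partial model, $\mathcal{T}$ a theory, and $P',\mathcal{T}'$ the partial model and theory produced by the witness-generation construction. If $M\in\mathit{solutions}(P',\mathcal{T}')$, then $\mathit{DS}_M(M)\ge g_{\mathrm{witness}}(M)$, where $\mathit{DS}_M(M)=\max_{k\vDash\mathcal{S}_{\mathrm{IPET}}\cup\mathcal{S}_{\mathrm{flow}}(M)}g_{\mathrm{IPET}}(k)$ and $g_{\mathrm{witness}}(M)=\max_{k\vDash\mathcal{S}_M}g_{\mathrm{IPET}}(k)$.
   Context: Linear systems. Fix a large finite reserve $\mathcal{X}$ of integer variables. A system of linear inequalities $\mathcal{S}$ is a finite set of inequalities $\sum_j a_{ij}x_j\le y_i$ (equations are written as pairs of inequalities). A valuation $k:\mathcal{X}\to\mathbb{Z}$ is a solution of $\mathcal{S}$ ($k\vDash\mathcal{S}$) if it satisfies all of them; $\mathcal{S}_1\vDash\mathcal{S}_2$ means every solution of $\mathcal{S}_1$ is a solution of $\mathcal{S}_2$. Models. A metamodel is a signature $\Sigma$ of unary class symbols, binary relation symbols, a unary existence symbol $\varepsilon$ and a binary equality symbol $\sim$. A (scoped) partial model $P=\langle O_P,I_P,\mathcal{S}_P\rangle$ consists of a finite object set $O_P$, a 3-valued interpretation $I_P(\sigma):O_P^{\mathrm{arity}(\sigma)}\to\{0,1,\tfrac12\}$ for each $\sigma\in\Sigma$ ($\tfrac12$ = unknown), and a scope $\mathcal{S}_P$ (a system of linear inequalities). $P$ is concrete if all values are $0$ or $1$, $I_P(\varepsilon)(o)=1$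 for all $o$, $I_P(\sim)(o_1,o_2)=1$ iff $o_1=o_2$, and $\mathcal{S}_P$ has a solution. Refinement: for $\mathit{abs}:O_Q\to O_P$, $P\succcurlyeq_{\mathit{abs}}Q$ holds if for all $\sigma$ and tuples $\bar q$, $I_P(\sigma)(\mathit{abs}(\bar q))$ is $\tfrac12$ or equals $I_Q(\sigma)(\bar q)$; every $p$ with $I_P(\varepsilon)(p)=1$ has a preimage under $\mathit{abs}$; and $\mathcal{S}_Q\vDash\mathcal{S}_P$. $P\succcurlyeq Q$ if $P\succcurlyeq_{\mathit{abs}}Q$ for some $\mathit{abs}$. For a first-order predicate $\varphi$ over $\Sigma$ with free variables $v_1,\dots,v_n$ and a concrete model $M$, $M\#\varphi$ is the number of maps $Z:\{v_1,\dots,v_n\}\to O_M$ under which $\varphi$ is true in $M$. A theory $\mathcal{T}=\langle\Phi,r\rangle$ is a finite set $\Phi$ of predicates with a map $r:\Phi\to\mathcal{X}$; a concrete $M$ is compatible with it ($M\vDash\mathcal{T}$) if $\mathcal{S}_M\vDash r(\varphi)=M\#\varphi$ for all $\varphi\in\Phi$. $\mathit{solutions}(P,\mathcal{T})$ is the set of concrete models $M$ with $P\succcurlyeq M$ and $M\vDash\mathcal{T}$. Program and IPET. $q$ is a query program generated from a graph-query search plan (nested for-loops implementing extend constraints and if-statements implementing check constraints). $\mathit{BB}$ is its set of basic blocks; its weighted CFG is $\langle V,E,s,t,w,\mathit{tr}\rangle$ with edges $E\subseteq V\times V$, start/end $s,t$, weights $w:E\to\mathbb{N}$, traceability $\mathit{tr}:V\to\mathit{BB}$.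 $f:E\to\mathcal{X}$ assigns distinct variables to edges. $\mathcal{S}_{\mathrm{IPET}}$ contains $\sum_{e=\langle s,n\rangle}f(e)=1$, $\sum_{e=\langle n,t\rangle}f(e)=1$, flow conservation at every $n\ne s,t$, $-f(e)\le0$, and possibly further low-level flow facts. $g_{\mathrm{IPET}}(k)=\sum_{e\in E}w(e)k(f(e))$. Basic block predicates. For $bb\in\mathit{BB}$, $\psi_{bb}$ is the conjunction of the atomic predicates of all for/if statements enclosing $bb$ (extend atoms without their existential quantifier; check literals as-is); $\psi_{bb}=\mathrm{true}$ if none. If $bb$ is the header of loop $\ell$, also $\psi'_{bb}=\psi_{bb}\wedge(\text{atom of }\ell)$. $\Psi$ is the set of all these predicates. For concrete $M$, $\mathcal{S}_{\mathrm{flow}}(M)$ contains for each $bb$: $\sum_{e=\langle n_1,n_2\rangle\in E,\mathit{tr}(n_1)=bb}f(e)=M\#\psi_{bb}+M\#\psi'_{bb}$ (loop header) or $=M\#\psi_{bb}$ (otherwise). Witness generation. Given $P=\langle O_P,I_P,\mathcal{S}_P\rangle$ and $\mathcal{T}=\langle\Phi,r\rangle$ (with the range of $f$ disjoint from the range of $r$ and from the variables of $\mathcal{S}_P$), extend $r$ to $r'$ on $\Phi\cup\Psi$ by assigning to each $\psi\in\Psi$ a fresh distinct variable (not in the range of $f$, of $r$, or in $\mathcal{S}_P$). $\mathcal{S}_{\mathrm{merge}}$ contains for each $bb$: $r'(\psi_{bb})+r'(\psi'_{bb})-\sum_{e=\langle n_1,n_2\rangle\in E,\mathit{tr}(n_1)=bb}f(e)=0$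 if $bb$ is a loop header, else $r'(\psi_{bb})-\sum_{e=\langle n_1,n_2\rangle\in E,\mathit{tr}(n_1)=bb}f(e)=0$. Set $P'=\langle O_P,I_P,\mathcal{S}_P\cup\mathcal{S}_{\mathrm{IPET}}\cup\mathcal{S}_{\mathrm{merge}}\rangle$ and $\mathcal{T}'=\langle\Phi\cup\Psi,r'\rangle$. *)

theory Defs
  imports Main "HOL-Library.FuncSet" "HOL-Library.Extended_Real"
begin

text \<open>An inequality sum_j a_j x_j <= c is represented by the pair (a, c).\<close>
type_synonym 'x ineq = "('x \<Rightarrow> int) \<times> int"

definition sat :: "('x::finite \<Rightarrow> int) \<Rightarrow> 'x ineq set \<Rightarrow> bool" where
  "sat k S \<longleftrightarrow> (\<forall>(a, c) \<in> S. (\<Sum>x\<in>UNIV. a x * k x) \<le> c)"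

definition entails :: "('x::finite) ineq set \<Rightarrow> 'x ineq set \<Rightarrow> bool" where
  "entails S1 S2 \<longleftrightarrow> (\<forall>k. sat k S1 \<longrightarrow> sat k S2)"

definition vars_of :: "'x ineq set \<Rightarrow> 'x set" where
  "vars_of S = {x. \<exists>(a, c) \<in> S. a x \<noteq> 0}"

definition eqn :: "('x \<Rightarrow> int) \<Rightarrow> int \<Rightarrow> 'x ineq set" where
  "eqn a c = {(a, c), (\<lambda>x. - a x, - c)}"

definition var :: "'x \<Rightarrow> 'x \<Rightarrow> int" where
  "var y = (\<lambda>x. if x = y then 1 else 0)"

text \<open>Coefficient vector of the linear term sum_{e in A} f(e).\<close>
definition sumv :: "('e \<Rightarrow> 'x) \<Rightarrow> 'e set \<Rightarrow> 'x \<Rightarrow> int" where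
  "sumv f A = (\<lambda>x. int (card {e \<in> A. f e = x}))"

datatype tv = F | T | U  \<comment> \<open>0, 1, 1/2 (unknown)\<close>

text \<open>A signature is given by an arity map together with the existence symbol eps and the
  equality symbol eqs.\<close>
definition sig_ok :: "('s \<Rightarrow> nat) \<Rightarrow> 's \<Rightarrow> 's \<Rightarrow> bool" where
  "sig_ok ar eps eqs \<longleftrightarrow> (\<forall>\<sigma>. ar \<sigma> \<in> {1, 2}) \<and> ar eps = 1 \<and> ar eqs = 2"

datatype ('s, 'v) pred =
    PTrue
  | PAtom 's "'v list"
  | PNot "('s, 'v) pred"
  | PAnd "('s, 'v) pred" "('s, 'v) pred"
  | PEx 'v "('s, 'v) pred"

fun fv :: "('s, 'v) pred \<Rightarrow> 'v set" where
  "fv PTrue = {}"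
| "fv (PAtom \<sigma> vs) = set vs"
| "fv (PNot \<phi>) = fv \<phi>"
| "fv (PAnd \<phi> \<psi>) = fv \<phi> \<union> fv \<psi>"
| "fv (PEx v \<phi>) = fv \<phi> - {v}"

record ('o, 's, 'x) pmodel =
  objs :: "'o set"
  interp :: "'s \<Rightarrow> 'o list \<Rightarrow> tv"
  scope :: "'x ineq set"

definition tuples :: "'o set \<Rightarrow> nat \<Rightarrow> 'o list set" where
  "tuples Ob n = {os. length os = n \<and> set os \<subseteq> Ob}"

fun holds :: "'o set \<Rightarrow> ('s \<Rightarrow> 'o list \<Rightarrow> tv) \<Rightarrow> ('v \<Rightarrow> 'o) \<Rightarrow> ('s, 'v) pred \<Rightarrow> bool" where
  "holds Ob I Z PTrue = True"
| "holds Ob I Z (PAtom \<sigma> vs) = (I \<sigma> (map Z vs) = T)"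
| "holds Ob I Z (PNot \<phi>) = (\<not> holds Ob I Z \<phi>)"
| "holds Ob I Z (PAnd \<phi> \<psi>) = (holds Ob I Z \<phi> \<and> holds Ob I Z \<psi>)"
| "holds Ob I Z (PEx v \<phi>) = (\<exists>ob\<in>Ob. holds Ob I (Z(v := ob)) \<phi>)"

text \<open>M # phi: number of maps from the free variables of phi to O_M making phi true.\<close>
definition mcount :: "('o, 's, 'x) pmodel \<Rightarrow> ('s, 'v) pred \<Rightarrow> nat" where
  "mcount M \<phi> = card {Z \<in> fv \<phi> \<rightarrow>\<^sub>E objs M.
      holds (objs M) (interp M) (\<lambda>v. if v \<in> fv \<phi> then Z v else undefined) \<phi>}"

definition pmodel_ok :: "('o, 's, 'x) pmodel \<Rightarrow> bool" where
  "pmodel_ok P \<longleftrightarrow> finite (objs P) \<and> finite (scope P)"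

definition concrete :: "('s \<Rightarrow> nat) \<Rightarrow> 's \<Rightarrow> 's \<Rightarrow> ('o, 's, 'x::finite) pmodel \<Rightarrow> bool" where
  "concrete ar eps eqs M \<longleftrightarrow> pmodel_ok M
     \<and> (\<forall>\<sigma>. \<forall>os \<in> tuples (objs M) (ar \<sigma>). interp M \<sigma> os \<noteq> U)
     \<and> (\<forall>ob\<in>objs M. interp M eps [ob] = T)
     \<and> (\<forall>o1\<in>objs M. \<forall>o2\<in>objs M. interp M eqs [o1, o2] = T \<longleftrightarrow> o1 = o2)
     \<and> (\<exists>k. sat k (scope M))"

definition refines_abs :: "('s \<Rightarrow> nat) \<Rightarrow> 's \<Rightarrow> ('o, 's, 'x::finite) pmodel \<Rightarrow> ('m \<Rightarrow> 'o)
     \<Rightarrow> ('m, 's, 'x) pmodel \<Rightarrow> bool" where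
  "refines_abs ar eps P ab Q \<longleftrightarrow> ab \<in> objs Q \<rightarrow> objs P
     \<and> (\<forall>\<sigma>. \<forall>qs \<in> tuples (objs Q) (ar \<sigma>).
           interp P \<sigma> (map ab qs) = U \<or> interp P \<sigma> (map ab qs) = interp Q \<sigma> qs)
     \<and> (\<forall>p\<in>objs P. interp P eps [p] = T \<longrightarrow> (\<exists>q\<in>objs Q. ab q = p))
     \<and> entails (scope Q) (scope P)"

definition refines :: "('s \<Rightarrow> nat) \<Rightarrow> 's \<Rightarrow> ('o, 's, 'x::finite) pmodel
     \<Rightarrow> ('m, 's, 'x) pmodel \<Rightarrow> bool" where
  "refines ar eps P Q \<longleftrightarrow> (\<exists>ab. refines_abs ar eps P ab Q)"

definition compatible :: "('o, 's, 'x::finite) pmodel \<Rightarrow> ('s, 'v) pred set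
     \<Rightarrow> (('s, 'v) pred \<Rightarrow> 'x) \<Rightarrow> bool" where
  "compatible M \<Phi> r \<longleftrightarrow>
     (\<forall>\<phi>\<in>\<Phi>. entails (scope M) (eqn (var (r \<phi>)) (int (mcount M \<phi>))))"

definition solutions :: "('s \<Rightarrow> nat) \<Rightarrow> 's \<Rightarrow> 's \<Rightarrow> ('o, 's, 'x::finite) pmodel
     \<Rightarrow> ('s, 'v) pred set \<Rightarrow> (('s, 'v) pred \<Rightarrow> 'x) \<Rightarrow> ('m, 's, 'x) pmodel set" where
  "solutions ar eps eqs P \<Phi> r =
     {M. concrete ar eps eqs M \<and> refines ar eps P M \<and> compatible M \<Phi> r}"

text \<open>A for-loop
  (extend constraint) has a header basic block, its atom (without the existential quantifier)
  and a body; an if-statement (check constraint) has its literal and a body.\<close>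
datatype ('bb, 's, 'v) stmt =
    Blk 'bb
  | For 'bb "('s, 'v) pred" "('bb, 's, 'v) stmt list"
  | If "('s, 'v) pred" "('bb, 's, 'v) stmt list"

text \<open>For each basic block: enclosing atoms/literals, and (for loop headers) its own loop atom.\<close>
fun binfo :: "('s, 'v) pred list \<Rightarrow> ('bb, 's, 'v) stmt
     \<Rightarrow> ('bb \<times> ('s, 'v) pred list \<times> ('s, 'v) pred option) list" where
  "binfo ctx (Blk b) = [(b, ctx, None)]"
| "binfo ctx (For b a body) = (b, ctx, Some a) # concat (map (binfo (ctx @ [a])) body)"
| "binfo ctx (If c body) = concat (map (binfo (ctx @ [c])) body)"

definition blocks :: "('bb, 's, 'v) stmt list \<Rightarrow> ('bb \<times> ('s, 'v) pred list \<times> ('s, 'v) pred option) list" where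
  "blocks q = concat (map (binfo []) q)"

definition wf_prog :: "('bb, 's, 'v) stmt list \<Rightarrow> bool" where
  "wf_prog q \<longleftrightarrow> distinct (map fst (blocks q))"

definition BBs :: "('bb, 's, 'v) stmt list \<Rightarrow> 'bb set" where
  "BBs q = set (map fst (blocks q))"

fun conj :: "('s, 'v) pred list \<Rightarrow> ('s, 'v) pred" where
  "conj [] = PTrue"
| "conj [a] = a"
| "conj (a # as) = PAnd a (conj as)"

definition psi :: "('bb, 's, 'v) stmt list \<Rightarrow> 'bb \<Rightarrow> ('s, 'v) pred" where
  "psi q b = conj (fst (the (map_of (blocks q) b)))"

text \<open>Some psi'_bb if bb is a loop header, None otherwise.\<close>
definition psi' :: "('bb, 's, 'v) stmt list \<Rightarrow> 'bb \<Rightarrow> ('s, 'v) pred option" where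
  "psi' q b = map_option (\<lambda>a. PAnd (psi q b) a) (snd (the (map_of (blocks q) b)))"

definition Psi :: "('bb, 's, 'v) stmt list \<Rightarrow> ('s, 'v) pred set" where
  "Psi q = psi q ` BBs q \<union> {\<phi>. \<exists>b\<in>BBs q. psi' q b = Some \<phi>}"

definition wf_cfg :: "'n set \<Rightarrow> ('n \<times> 'n) set \<Rightarrow> 'n \<Rightarrow> 'n \<Rightarrow> ('n \<Rightarrow> 'bb) \<Rightarrow> 'bb set \<Rightarrow> bool" where
  "wf_cfg V E s t tr BB \<longleftrightarrow> finite V \<and> E \<subseteq> V \<times> V \<and> s \<in> V \<and> t \<in> V \<and> tr ` V \<subseteq> BB"

definition S_IPET :: "'n set \<Rightarrow> ('n \<times> 'n) set \<Rightarrow> 'n \<Rightarrow> 'n \<Rightarrow> ('n \<times> 'n \<Rightarrow> 'x)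
     \<Rightarrow> 'x ineq set \<Rightarrow> 'x ineq set" where
  "S_IPET V E s t f LL =
     eqn (sumv f {e \<in> E. fst e = s}) 1
   \<union> eqn (sumv f {e \<in> E. snd e = t}) 1
   \<union> (\<Union>n \<in> V - {s, t}. eqn (\<lambda>x. sumv f {e \<in> E. snd e = n} x - sumv f {e \<in> E. fst e = n} x) 0)
   \<union> {(\<lambda>x. - var (f e) x, 0) | e. e \<in> E}
   \<union> LL"

definition g_IPET :: "('n \<times> 'n) set \<Rightarrow> ('n \<times> 'n \<Rightarrow> nat) \<Rightarrow> ('n \<times> 'n \<Rightarrow> 'x) \<Rightarrow> ('x \<Rightarrow> int) \<Rightarrow> int" where
  "g_IPET E w f k = (\<Sum>e\<in>E. int (w e) * k (f e))"

definition outE :: "('n \<times> 'n) set \<Rightarrow> ('n \<Rightarrow> 'bb) \<Rightarrow> 'bb \<Rightarrow> ('n \<times> 'n) set" where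
  "outE E tr b = {e \<in> E. tr (fst e) = b}"

definition S_flow :: "('bb, 's, 'v) stmt list \<Rightarrow> ('n \<times> 'n) set \<Rightarrow> ('n \<Rightarrow> 'bb) \<Rightarrow> ('n \<times> 'n \<Rightarrow> 'x)
     \<Rightarrow> ('m, 's, 'x) pmodel \<Rightarrow> 'x ineq set" where
  "S_flow q E tr f M = (\<Union>b \<in> BBs q. eqn (sumv f (outE E tr b))
      (int (mcount M (psi q b)) + (case psi' q b of None \<Rightarrow> 0 | Some \<phi> \<Rightarrow> int (mcount M \<phi>))))"

definition S_merge :: "('bb, 's, 'v) stmt list \<Rightarrow> ('n \<times> 'n) set \<Rightarrow> ('n \<Rightarrow> 'bb) \<Rightarrow> ('n \<times> 'n \<Rightarrow> 'x)
     \<Rightarrow> (('s, 'v) pred \<Rightarrow> 'x) \<Rightarrow> 'x ineq set" where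
  "S_merge q E tr f r' = (\<Union>b \<in> BBs q. eqn (\<lambda>x. var (r' (psi q b)) x
      + (case psi' q b of None \<Rightarrow> 0 | Some \<phi> \<Rightarrow> var (r' \<phi>) x)
      - sumv f (outE E tr b) x) 0)"

text \<open>Maximum of the IPET objective over the solutions of a system, in the extended reals
  (unbounded = infinity, infeasible = minus infinity).\<close>
definition maxg :: "('n \<times> 'n) set \<Rightarrow> ('n \<times> 'n \<Rightarrow> nat) \<Rightarrow> ('n \<times> 'n \<Rightarrow> 'x::finite)
     \<Rightarrow> 'x ineq set \<Rightarrow> ereal" where
  "maxg E w f S = Sup ((\<lambda>k. ereal (real_of_int (g_IPET E w f k))) ` {k. sat k S})"

definition DS :: "('bb, 's, 'v) stmt list \<Rightarrow> 'n set \<Rightarrow> ('n \<times> 'n) set \<Rightarrow> 'n \<Rightarrow> 'n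
     \<Rightarrow> ('n \<times> 'n \<Rightarrow> nat) \<Rightarrow> ('n \<Rightarrow> 'bb) \<Rightarrow> ('n \<times> 'n \<Rightarrow> 'x::finite) \<Rightarrow> 'x ineq set
     \<Rightarrow> ('m, 's, 'x) pmodel \<Rightarrow> ereal" where
  "DS q V E s t w tr f LL M = maxg E w f (S_IPET V E s t f LL \<union> S_flow q E tr f M)"

definition g_witness :: "('n \<times> 'n) set \<Rightarrow> ('n \<times> 'n \<Rightarrow> nat) \<Rightarrow> ('n \<times> 'n \<Rightarrow> 'x::finite)
     \<Rightarrow> ('m, 's, 'x) pmodel \<Rightarrow> ereal" where
  "g_witness E w f M = maxg E w f (scope M)"

definition witness_P :: "('bb, 's, 'v) stmt list \<Rightarrow> 'n set \<Rightarrow> ('n \<times> 'n) set \<Rightarrow> 'n \<Rightarrow> 'n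
     \<Rightarrow> ('n \<Rightarrow> 'bb) \<Rightarrow> ('n \<times> 'n \<Rightarrow> 'x) \<Rightarrow> 'x ineq set \<Rightarrow> (('s, 'v) pred \<Rightarrow> 'x)
     \<Rightarrow> ('o, 's, 'x) pmodel \<Rightarrow> ('o, 's, 'x) pmodel" where
  "witness_P q V E s t tr f LL r' P =
     P\<lparr>scope := scope P \<union> S_IPET V E s t f LL \<union> S_merge q E tr f r'\<rparr>"

definition extends_fresh :: "('bb, 's, 'v) stmt list \<Rightarrow> ('s, 'v) pred set
     \<Rightarrow> (('s, 'v) pred \<Rightarrow> 'x) \<Rightarrow> (('s, 'v) pred \<Rightarrow> 'x) \<Rightarrow> 'x set \<Rightarrow> bool" where
  "extends_fresh q \<Phi> r r' used \<longleftrightarrow>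
     (\<forall>\<phi>\<in>\<Phi>. r' \<phi> = r \<phi>) \<and> inj_on r' (Psi q - \<Phi>)
     \<and> r' ` (Psi q - \<Phi>) \<inter> (used \<union> r ` \<Phi>) = {}"

end

theory Submission
  imports Defs
begin

text \<open>Every valuation satisfying the scope of \<open>M\<close> also satisfies the IPET system and the flow
  facts of \<open>M\<close>: the IPET system is part of the witness scope, which \<open>M\<close> refines, and each merge
  equation \<open>r'(\<psi>) + r'(\<psi>') = \<Sum> f(e)\<close> becomes the flow equation of its basic block once the
  compatibility of \<open>M\<close> fixes \<open>r'(\<psi>) = M#\<psi>\<close>. So \<open>DS\<^sub>M(M)\<close> maximises the IPET objective over a
  larger set of valuations than \<open>g_witness(M)\<close>.\<close>

lemma sat_Un_iff: "sat k (A \<union> B) \<longleftrightarrow> sat k A \<and> sat k B"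
  unfolding sat_def by blast

lemma sat_UN_iff: "sat k (\<Union>b\<in>B. S b) \<longleftrightarrow> (\<forall>b\<in>B. sat k (S b))"
  unfolding sat_def by blast

lemma sat_eqn_iff: "sat k (eqn a c) \<longleftrightarrow> (\<Sum>x\<in>UNIV. a x * k x) = c"
proof -
  have "(\<Sum>x\<in>UNIV. - a x * k x) = - (\<Sum>x\<in>UNIV. a x * k x)"
    by (simp add: sum_negf)
  then show ?thesis unfolding sat_def eqn_def by auto
qed

lemma sum_var_mult: "(\<Sum>x\<in>(UNIV::'x::finite set). var y x * k x) = k y"
proof -
  have "(\<Sum>x\<in>(UNIV::'x set). var y x * k x) = (\<Sum>x\<in>UNIV. if x = y then k x else 0)"
    unfolding var_def by (rule sum.cong) auto
  then show ?thesis by simp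
qed

lemma sum_case_var_mult:
  "(\<Sum>x\<in>(UNIV::'x::finite set). (case opt of None \<Rightarrow> 0 | Some \<phi> \<Rightarrow> var (r \<phi>) x) * k x)
     = (case opt of None \<Rightarrow> 0 | Some \<phi> \<Rightarrow> k (r \<phi>))"
  by (cases opt) (simp_all add: sum_var_mult)

lemma sat_eqn_var_iff: "sat k (eqn (var y) c) \<longleftrightarrow> k y = c"
  by (simp add: sat_eqn_iff sum_var_mult)

lemma maxg_mono_entails:
  assumes "entails S' S"
  shows "maxg E w f S' \<le> maxg E w f S"
  unfolding maxg_def
  by (rule Sup_subset_mono) (use assms in \<open>auto simp: entails_def\<close>)

lemma solutions_entails_scope:
  assumes "M \<in> solutions ar eps eqs P \<Phi> r"
  shows "entails (scope M) (scope P)"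
  using assms unfolding solutions_def refines_def refines_abs_def by auto

lemma solutions_sat_count:
  assumes "M \<in> solutions ar eps eqs P \<Phi> r" and "sat k (scope M)" and "\<phi> \<in> \<Phi>"
  shows "k (r \<phi>) = int (mcount M \<phi>)"
  using assms unfolding solutions_def compatible_def entails_def
  by (auto simp: sat_eqn_var_iff)

lemma sat_S_flow_if_S_merge:
  assumes merge: "sat k (S_merge q E tr f r')"
    and count: "\<And>\<phi>. \<phi> \<in> Psi q \<Longrightarrow> k (r' \<phi>) = int (mcount M \<phi>)"
  shows "sat (k::'x::finite \<Rightarrow> int) (S_flow q E tr f M)"
  unfolding S_flow_def sat_UN_iff
proof
  fix b assume b: "b \<in> BBs q"
  let ?out = "sumv f (outE E tr b)"
  let ?hd = "\<lambda>x. case psi' q b of None \<Rightarrow> 0 | Some \<phi> \<Rightarrow> var (r' \<phi>) x"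
  let ?count_hd = "case psi' q b of None \<Rightarrow> 0 | Some \<phi> \<Rightarrow> int (mcount M \<phi>)"
  have "sat k (eqn (\<lambda>x. var (r' (psi q b)) x + ?hd x - ?out x) 0)"
    using merge b unfolding S_merge_def sat_UN_iff by blast
  then have "k (r' (psi q b)) + (case psi' q b of None \<Rightarrow> 0 | Some \<phi> \<Rightarrow> k (r' \<phi>))
      = (\<Sum>x\<in>UNIV. ?out x * k x)"
    by (simp add: sat_eqn_iff distrib_right left_diff_distrib sum.distrib sum_subtractf
        sum_case_var_mult sum_var_mult)
  moreover have "k (r' (psi q b)) = int (mcount M (psi q b))"
    using b count unfolding Psi_def by blast
  moreover have "(case psi' q b of None \<Rightarrow> 0 | Some \<phi> \<Rightarrow> k (r' \<phi>)) = ?count_hd"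
    using b count unfolding Psi_def by (auto split: option.split)
  ultimately show "sat k (eqn ?out (int (mcount M (psi q b)) + ?count_hd))"
    by (simp add: sat_eqn_iff)
qed

theorem lemmaA3:
  fixes ar :: "'s \<Rightarrow> nat" and eps eqs :: 's
    and q :: "('bb, 's, 'v) stmt list"
    and V :: "'n set" and E :: "('n \<times> 'n) set" and s t :: 'n
    and w :: "'n \<times> 'n \<Rightarrow> nat" and tr :: "'n \<Rightarrow> 'bb"
    and f :: "'n \<times> 'n \<Rightarrow> 'x::finite" and LL :: "'x ineq set"
    and P :: "('o, 's, 'x) pmodel"
    and \<Phi> :: "('s, 'v) pred set" and r r' :: "('s, 'v) pred \<Rightarrow> 'x"
    and M :: "('m, 's, 'x) pmodel"
  assumes "sig_ok ar eps eqs"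
    and "wf_prog q"
    and "wf_cfg V E s t tr (BBs q)"
    and "inj_on f E"
    and "finite LL"
    and "pmodel_ok P"
    and "finite \<Phi>"
    and "f ` E \<inter> r ` \<Phi> = {}"
    and "f ` E \<inter> vars_of (scope P) = {}"
    and "extends_fresh q \<Phi> r r' (f ` E \<union> vars_of (scope P))"
    and "M \<in> solutions ar eps eqs (witness_P q V E s t tr f LL r' P) (\<Phi> \<union> Psi q) r'"
  shows "DS q V E s t w tr f LL M \<ge> g_witness E w f M"
proof -
  note M_sol = assms(11)
  have "entails (scope M) (S_IPET V E s t f LL \<union> S_flow q E tr f M)"
    unfolding entails_def
  proof (intro allI impI)
    fix k assume k: "sat k (scope M)"
    then have witness: "sat k (scope P \<union> S_IPET V E s t f LL \<union> S_merge q E tr f r')"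
      using solutions_entails_scope[OF M_sol] unfolding entails_def witness_P_def by simp
    have "sat k (S_flow q E tr f M)"
      using witness solutions_sat_count[OF M_sol k]
      by (intro sat_S_flow_if_S_merge) (auto simp: sat_Un_iff)
    with witness show "sat k (S_IPET V E s t f LL \<union> S_flow q E tr f M)"
      by (simp add: sat_Un_iff)
  qed
  then show ?thesis
    unfolding DS_def g_witness_def by (rule maxg_mono_entails)
qed

end
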